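(* Let $G=(V,E)$ be a strongly semiconnected digraph and let $P$ be a principal cycle set of $G$. For each edge $e\in E$ let $w(e)$ be the number of elements of $P$ containing $e$. Then the weights $w(e)$, $e\in E$, are positive integers and make $G$ weight-balanced.
   Context: A digraph $G=(V,E)$ has finite $V$ and $E\subseteq V\times V$ (self-loops allowed). $G$ is strongly semiconnected if, for all $v,w\in V$, the existence of a directed path from $v$ to $w$ implies the existence of one from $w$ to $v$. A cycle is a directed path $v_{i_1},\dots,v_{i_k},v_{i_1}$ with distinct $v_{i_1},\dots,v_{i_k}$ (self-loops are cycles), viewed as a subdigraph. $\mathcal{C}(G)$ is the set of subdigraphs of $G$ that are a single edgeless vertex, a cycle, or a union of pairwise vertex-disjoint cycles. A family generates $G$ if the union of vertex sets is $V$ and of edge sets is $E$. A principal cycle set is a subset of $\mathcal{C}(G)$ generating $G$ of minimum cardinality among such subsets. Weights on edges make $G$ weight-balanced if at each vertex the sum of weights of incoming edges equals the sum of weights of outgoing edges. *)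

theory Defs
  imports Main
begin

text \<open>A digraph is a pair (V, E) with V finite and E a subset of V x V (self-loops allowed).
  Subdigraphs are represented as pairs (vertex set, edge set).\<close>

definition digraph :: "'a set \<Rightarrow> ('a \<times> 'a) set \<Rightarrow> bool" where
  "digraph V E \<longleftrightarrow> finite V \<and> E \<subseteq> V \<times> V"

definition strongly_semiconnected :: "'a set \<Rightarrow> ('a \<times> 'a) set \<Rightarrow> bool" where
  "strongly_semiconnected V E \<longleftrightarrow>
     (\<forall>v\<in>V. \<forall>w\<in>V. (v, w) \<in> E\<^sup>* \<longrightarrow> (w, v) \<in> E\<^sup>*)"

text \<open>A cycle given by the list [v1,...,vk] of distinct vertices: edges v_i -> v_(i+1)
  and v_k -> v_1 (k = 1 gives a self-loop).\<close>
definition is_cycle_list :: "('a \<times> 'a) set \<Rightarrow> 'a list \<Rightarrow> bool" where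
  "is_cycle_list E vs \<longleftrightarrow> vs \<noteq> [] \<and> distinct vs \<and>
     (\<forall>i<length vs. (vs ! i, vs ! (Suc i mod length vs)) \<in> E)"

definition cycle_of :: "'a list \<Rightarrow> 'a set \<times> ('a \<times> 'a) set" where
  "cycle_of vs = (set vs, {(vs ! i, vs ! (Suc i mod length vs)) | i. i < length vs})"

definition cycles :: "('a \<times> 'a) set \<Rightarrow> ('a set \<times> ('a \<times> 'a) set) set" where
  "cycles E = {cycle_of vs | vs. is_cycle_list E vs}"

definition CG :: "'a set \<Rightarrow> ('a \<times> 'a) set \<Rightarrow> ('a set \<times> ('a \<times> 'a) set) set" where
  "CG V E = {({v}, {}) | v. v \<in> V} \<union>
     {(\<Union> (fst ` F), \<Union> (snd ` F)) | F. finite F \<and> F \<noteq> {} \<and> F \<subseteq> cycles E \<and>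
        (\<forall>C\<in>F. \<forall>D\<in>F. C \<noteq> D \<longrightarrow> fst C \<inter> fst D = {})}"

definition generates :: "'a set \<Rightarrow> ('a \<times> 'a) set \<Rightarrow> ('a set \<times> ('a \<times> 'a) set) set \<Rightarrow> bool" where
  "generates V E P \<longleftrightarrow> \<Union> (fst ` P) = V \<and> \<Union> (snd ` P) = E"

definition principal_cycle_set ::
  "'a set \<Rightarrow> ('a \<times> 'a) set \<Rightarrow> ('a set \<times> ('a \<times> 'a) set) set \<Rightarrow> bool" where
  "principal_cycle_set V E P \<longleftrightarrow> P \<subseteq> CG V E \<and> generates V E P \<and>
     (\<forall>Q. Q \<subseteq> CG V E \<and> generates V E Q \<longrightarrow> card P \<le> card Q)"

definition weight_balanced :: "'a set \<Rightarrow> ('a \<times> 'a) set \<Rightarrow> ('a \<times> 'a \<Rightarrow> 'b::comm_monoid_add) \<Rightarrow> bool" where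
  "weight_balanced V E w \<longleftrightarrow>
     (\<forall>v\<in>V. (\<Sum>e\<in>{e\<in>E. snd e = v}. w e) = (\<Sum>e\<in>{e\<in>E. fst e = v}. w e))"

end

theory Submission
  imports Defs
begin

text \<open>Every member of C(G) is a vertex-disjoint union of cycles, so each of its edge sets has
  in-degree equal to out-degree at every vertex. Summing these balanced edge sets over P and
  counting incidences twice shows that the multiplicity weights are balanced; positivity holds
  because P covers E.\<close>

definition degree_balanced :: "('a \<times> 'a) set \<Rightarrow> bool" where
  "degree_balanced F \<longleftrightarrow> (\<forall>v. card {e \<in> F. snd e = v} = card {e \<in> F. fst e = v})"

lemma bij_betw_Suc_mod: "bij_betw (\<lambda>i. Suc i mod n) {..<n} {..<n}"
proof (cases "n = 0")
  case False
  have inj: "inj_on (\<lambda>i. Suc i mod n) {..<n}"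
  proof (rule inj_onI)
    fix i j assume "i \<in> {..<n}" "j \<in> {..<n}" "Suc i mod n = Suc j mod n"
    then show "i = j"
      by (cases "Suc i = n"; cases "Suc j = n") auto
  qed
  moreover have "(\<lambda>i. Suc i mod n) ` {..<n} \<subseteq> {..<n}"
    using False by auto
  ultimately show ?thesis
    by (simp add: bij_betw_def endo_inj_surj)
qed simp

lemma card_filter_Suc_mod:
  "card {i \<in> {..<n}. g (Suc i mod n)} = card {j \<in> {..<n}. g j}"
  using sum.reindex_bij_betw[OF bij_betw_Suc_mod, of "\<lambda>j. if g j then 1 else 0 :: nat" n]
  by (simp add: sum.If_cases Int_def)

lemma edges_cycle_of:
  "snd (cycle_of vs) = (\<lambda>i. (vs ! i, vs ! (Suc i mod length vs))) ` {..<length vs}"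
  unfolding cycle_of_def by auto

lemma degree_balanced_cycle_of:
  assumes "distinct vs"
  shows "degree_balanced (snd (cycle_of vs))"
  unfolding degree_balanced_def
proof
  fix v
  define n where "n = length vs"
  define edge where "edge i = (vs ! i, vs ! (Suc i mod n))" for i
  have inj: "inj_on edge {..<n}"
    by (rule inj_onI) (auto simp: edge_def n_def nth_eq_iff_index_eq[OF assms])
  have card_edges: "card {e \<in> snd (cycle_of vs). Q e} = card {i \<in> {..<n}. Q (edge i)}" for Q
  proof -
    have "{e \<in> snd (cycle_of vs). Q e} = edge ` {i \<in> {..<n}. Q (edge i)}"
      unfolding edges_cycle_of by (auto simp: edge_def n_def)
    moreover have "inj_on edge {i \<in> {..<n}. Q (edge i)}"
      using inj by (rule inj_on_subset) auto
    ultimately show ?thesis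
      by (simp add: card_image)
  qed
  show "card {e \<in> snd (cycle_of vs). snd e = v} = card {e \<in> snd (cycle_of vs). fst e = v}"
    unfolding card_edges edge_def using card_filter_Suc_mod[of n "\<lambda>j. vs ! j = v"] by simp
qed

lemma degree_balanced_Union_disjoint:
  assumes "finite \<A>" "pairwise disjnt \<A>" "\<forall>A\<in>\<A>. finite A \<and> degree_balanced A"
  shows "degree_balanced (\<Union>\<A>)"
  unfolding degree_balanced_def
proof
  fix v
  have card_Union: "card {e \<in> \<Union>\<A>. Q e} = (\<Sum>A\<in>\<A>. card {e \<in> A. Q e})" for Q
  proof -
    have "{e \<in> \<Union>\<A>. Q e} = (\<Union>A\<in>\<A>. {e \<in> A. Q e})"
      by auto
    also have "card \<dots> = (\<Sum>A\<in>\<A>. card {e \<in> A. Q e})"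
      using assms(1-3) by (intro card_UN_disjoint) (auto simp: pairwise_def disjnt_def)
    finally show ?thesis .
  qed
  show "card {e \<in> \<Union>\<A>. snd e = v} = card {e \<in> \<Union>\<A>. fst e = v}"
    unfolding card_Union using assms(3) by (intro sum.cong) (auto simp: degree_balanced_def)
qed

lemma cycles_edges_subset:
  assumes "C \<in> cycles E"
  shows "snd C \<subseteq> fst C \<times> fst C"
  using assms by (auto simp: cycles_def cycle_of_def is_cycle_list_def)

lemma CG_degree_balanced:
  assumes "H \<in> CG V E"
  shows "degree_balanced (snd H)"
proof -
  consider (vertex) u where "H = ({u}, {})"
    | (cycles) F where "H = (\<Union> (fst ` F), \<Union> (snd ` F))" "finite F" "F \<subseteq> cycles E"
        "\<forall>C\<in>F. \<forall>D\<in>F. C \<noteq> D \<longrightarrow> fst C \<inter> fst D = {}"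
    using assms unfolding CG_def by blast
  then show ?thesis
  proof cases
    case vertex
    then show ?thesis by (simp add: degree_balanced_def)
  next
    case cycles
    have "pairwise disjnt (snd ` F)"
    proof (rule pairwise_imageI)
      fix C D assume "C \<in> F" "D \<in> F" "snd C \<noteq> snd D"
      then have "fst C \<inter> fst D = {}"
        using cycles(4) by metis
      then show "disjnt (snd C) (snd D)"
        using \<open>C \<in> F\<close> \<open>D \<in> F\<close> cycles(3) cycles_edges_subset[of C E] cycles_edges_subset[of D E]
        by (auto simp: disjnt_def)
    qed
    moreover have "finite (snd C) \<and> degree_balanced (snd C)" if "C \<in> F" for C
    proof -
      obtain vs where "C = cycle_of vs" "is_cycle_list E vs"
        using \<open>C \<in> F\<close> cycles(3) unfolding cycles_def by auto
      then show ?thesis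
        by (simp add: degree_balanced_cycle_of is_cycle_list_def) (simp add: edges_cycle_of)
    qed
    ultimately show ?thesis
      using cycles(1,2) by (simp add: degree_balanced_Union_disjoint)
  qed
qed

lemma finite_cycles:
  assumes "digraph V E"
  shows "finite (cycles E)"
proof -
  have "cycles E \<subseteq> cycle_of ` {vs. set vs \<subseteq> V \<and> distinct vs}"
  proof
    fix C assume "C \<in> cycles E"
    then obtain vs where C: "C = cycle_of vs" and cyc: "is_cycle_list E vs"
      unfolding cycles_def by auto
    have "set vs \<subseteq> V"
    proof
      fix x assume "x \<in> set vs"
      then obtain i where "i < length vs" "x = vs ! i"
        by (auto simp: in_set_conv_nth)
      then show "x \<in> V"
        using cyc assms unfolding is_cycle_list_def digraph_def by blast
    qed
    with C cyc show "C \<in> cycle_of ` {vs. set vs \<subseteq> V \<and> distinct vs}"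
      unfolding is_cycle_list_def by blast
  qed
  moreover have "finite V"
    using assms by (simp add: digraph_def)
  ultimately show ?thesis
    using finite_subset_distinct finite_subset by blast
qed

lemma finite_CG:
  assumes "digraph V E"
  shows "finite (CG V E)"
proof -
  have "CG V E \<subseteq> (\<lambda>v. ({v}, {})) ` V \<union> (\<lambda>F. (\<Union> (fst ` F), \<Union> (snd ` F))) ` Pow (cycles E)"
    unfolding CG_def by blast
  then show ?thesis
    using assms finite_cycles[OF assms] finite_subset by (fastforce simp: digraph_def)
qed

lemma sum_card_incidences_swap:
  assumes "finite A" "finite P"
  shows "(\<Sum>a\<in>A. card {H \<in> P. a \<in> f H}) = (\<Sum>H\<in>P. card {a \<in> f H. a \<in> A})"
proof -
  have "(\<Sum>a\<in>A. card {H \<in> P. a \<in> f H}) = (\<Sum>a\<in>A. \<Sum>H\<in>P. if a \<in> f H then 1 else 0)"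
    using assms(2) by (simp add: sum.If_cases Int_def conj_commute)
  also have "\<dots> = (\<Sum>H\<in>P. \<Sum>a\<in>A. if a \<in> f H then 1 else 0)"
    by (rule sum.swap)
  also have "\<dots> = (\<Sum>H\<in>P. card {a \<in> f H. a \<in> A})"
    using assms(1) by (simp add: sum.If_cases Int_def conj_commute)
  finally show ?thesis .
qed

lemma weight_balanced_multiplicity:
  assumes "finite E" "finite P" "\<forall>H\<in>P. snd H \<subseteq> E \<and> degree_balanced (snd H)"
  shows "weight_balanced V E (\<lambda>e. int (card {H \<in> P. e \<in> snd H}))"
  unfolding weight_balanced_def
proof
  fix v
  have count: "(\<Sum>e\<in>{e \<in> E. Q e}. card {H \<in> P. e \<in> snd H}) = (\<Sum>H\<in>P. card {e \<in> snd H. Q e})"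
    for Q
  proof -
    have "{e \<in> snd H. e \<in> {e \<in> E. Q e}} = {e \<in> snd H. Q e}" if "H \<in> P" for H
      using assms(3) that by auto
    then show ?thesis
      using assms(1,2) by (simp add: sum_card_incidences_swap)
  qed
  show "(\<Sum>e\<in>{e \<in> E. snd e = v}. int (card {H \<in> P. e \<in> snd H}))
      = (\<Sum>e\<in>{e \<in> E. fst e = v}. int (card {H \<in> P. e \<in> snd H}))"
    unfolding of_nat_sum[symmetric] count
    using assms(3) by (simp add: degree_balanced_def)
qed

theorem lemma2p5:
  fixes V :: "'a set" and E :: "('a \<times> 'a) set"
    and P :: "('a set \<times> ('a \<times> 'a) set) set"
  assumes "digraph V E"
    and "strongly_semiconnected V E"
    and "principal_cycle_set V E P"
  defines "w \<equiv> (\<lambda>e. int (card {H \<in> P. e \<in> snd H}))"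
  shows "(\<forall>e\<in>E. w e > 0) \<and> weight_balanced V E w"
proof
  have P_CG: "P \<subseteq> CG V E" and covers: "\<Union> (snd ` P) = E"
    using assms(3) unfolding principal_cycle_set_def generates_def by auto
  have "finite P"
    using P_CG finite_CG[OF assms(1)] by (rule finite_subset)
  have "finite E"
    using assms(1) unfolding digraph_def by (meson finite_SigmaI finite_subset)
  show "\<forall>e\<in>E. w e > 0"
    using covers \<open>finite P\<close> by (force simp: w_def card_gt_0_iff)
  show "weight_balanced V E w"
    unfolding w_def using \<open>finite E\<close> \<open>finite P\<close> P_CG covers
    by (intro weight_balanced_multiplicity) (auto intro: CG_degree_balanced)
qed

end
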